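(* Let $(\mathcal{C},\mathbb{E},\mathfrak{s})$ be an extriangulated category with enough injective objects and enough projective objects, and let $(\mathcal{I},\mathcal{J})$ be an $\mathbb{E}$-cotorsion pair of ideals. Then the following statements are equivalent: (1) $(\mathcal{I},\mathcal{J})$ is a complete $\mathbb{E}$-cotorsion pair; (2) $\mathcal{I}$ is a special precovering ideal; (3) there is an additive subfunctor $\mathbb{F}\subseteq\mathbb{E}$ having enough special injective morphisms with $\mathcal{I}=\mathrm{Ph}(\mathbb{F})$; (4) there is an additive subfunctor $\mathbb{F}\subseteq\mathbb{E}$ having enough special projective morphisms with $\mathcal{I}=\mathbb{F}\text{-}\mathrm{proj}$; (5) $\mathcal{I}^\star$ has enough special injective morphisms and $\mathcal{I}=\mathrm{Ph}(\mathcal{I}^\star)$; (6) $\mathcal{J}_\star$ has enough special projective morphisms and $\mathcal{I}=\mathcal{J}_\star\text{-}\mathrm{proj}$; (7) $\mathcal{J}$ is a special preenveloping ideal; (8) there is an additive subfunctor $\mathbb{F}\subseteq\mathbb{E}$ having enough special projective morphisms with $\mathcal{J}=\mathrm{Coph}(\mathbb{F})$; (9) there is an additive subfunctor $\mathbb{F}\subseteq\mathbb{E}$ having enough special injective morphisms with $\mathcal{J}=\mathbb{F}\text{-}\mathrm{inj}$; (10) $\mathcal{J}_\star$ has enough special projective morphisms and $\mathcal{J}=\mathrm{Coph}(\mathcal{J}_\star)$; (11) $\mathcal{I}^\star$ has enough special injective morphisms and $\mathcal{J}=\mathcal{I}^\star\text{-}\mathrm{inj}$.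
   Context: An extriangulated category $(\mathcal{C},\mathbb{E},\mathfrak{s})$ (Nakaoka–Palu): additive $\mathcal{C}$, biadditive $\mathbb{E}:\mathcal{C}^{\mathrm{op}}\times\mathcal{C}\to\mathrm{Ab}$, additive realization $\mathfrak{s}$ assigning to each $\delta\in\mathbb{E}(C,A)$ an equivalence class of sequences $A\to B\to C$, forming $\mathbb{E}$-triangles $A\to B\to C\overset{\delta}{\dashrightarrow}$, satisfying (ET1)–(ET4), (ET3)$^{\mathrm{op}}$, (ET4)$^{\mathrm{op}}$. Notation $a_\star\delta=\mathbb{E}(C,a)(\delta)$, $c^\star\delta=\mathbb{E}(c,A)(\delta)$; a morphism of $\mathbb{E}$-triangles is a commuting triple $(a,b,c)$ with $a_\star\delta=c^\star\delta'$. Injective object $E$: $\mathbb{E}(C,E)=0$ for all $C$; projective object $P$: $\mathbb{E}(P,A)=0$ for all $A$; enough injectives: every $A$ admits an $\mathbb{E}$-triangle $A\to E\to C\overset{\delta}{\dashrightarrow}$, $E$ injective; enough projectives: every $C$ admits $K\to P\to C\overset{\delta}{\dashrightarrow}$, $P$ projective. Ideal: class of morphisms with zeros, closed under sums and two-sided composition. Additive subfunctor $\mathbb{F}$: subgroups $\mathbb{F}(C,A)\subseteq\mathbb{E}(C,A)$ stable under $a_\star,c^\star$; $\mathbb{F}$-triangles have extension in $\mathbb{F}$. $\mathrm{Ph}(\mathbb{F})$: morphisms $\varphi:X\to C$ with $\varphi^\star\delta\in\mathbb{F}$ for all $\delta\in\mathbb{E}(C,A)$; $\mathrm{Coph}(\mathbb{F})$: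 morphisms $\psi:A\to Y$ with $\psi_\star\delta\in\mathbb{F}$ for all $\delta\in\mathbb{E}(C,A)$. $\mathbb{F}\text{-}\mathrm{inj}$: $i:A\to Y$ with $i_\star\delta=0$ for all $\delta\in\mathbb{F}(C,A)$; $\mathbb{F}\text{-}\mathrm{proj}$: $p:X\to C$ with $p^\star\delta=0$ for all $\delta\in\mathbb{F}(C,A)$. For an ideal $\mathcal{I}$: $\mathcal{I}^\star=\{i^\star\delta\}$, $\mathcal{I}_\star=\{i_\star\delta\}$ ($i\in\mathcal{I}$, $\delta$ any composable $\mathbb{E}$-extension), additive subfunctors of $\mathbb{E}$. $\mathbb{F}$ has enough special injective morphisms: every $A$ admits an $\mathbb{F}$-triangle $A\xrightarrow{e}B\to C\overset{\delta}{\dashrightarrow}$ with $e\in\mathbb{F}\text{-}\mathrm{inj}$, an $\mathbb{E}$-triangle $A\to B'\to C'\overset{\delta'}{\dashrightarrow}$ and a morphism $(\mathrm{id}_A,b,\varphi)$ from the former to the latter with $\varphi\in\mathrm{Ph}(\mathbb{F})$. Dually, enough special projective morphisms: every $C$ admits an $\mathbb{F}$-triangle $K\to B\xrightarrow{p}C\overset{\delta}{\dashrightarrow}$ with $p\in\mathbb{F}\text{-}\mathrm{proj}$, an $\mathbb{E}$-triangle $K'\to B'\to C\overset{\delta'}{\dashrightarrow}$ and a morphism $(\psi,b,\mathrm{id}_C)$ from the latter to the former with $\psi\in\mathrm{Coph}(\mathbb{F})$. $\mathcal{M}^{\perp_{\mathbb{E}}}=\{g:A\to Y\mid m^\star g_\star\delta=0\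 \forall m\in\mathcal{M},\,m:X\to C,\ \forall\delta\in\mathbb{E}(C,A)\}$; ${}^{\perp_{\mathbb{E}}}\mathcal{M}$ defined by $g^\star m_\star\delta=0$. $\mathbb{E}$-cotorsion pair: $\mathcal{I}={}^{\perp_{\mathbb{E}}}\mathcal{J}$, $\mathcal{J}=\mathcal{I}^{\perp_{\mathbb{E}}}$; complete if $\mathcal{I}$ special precovering and $\mathcal{J}$ special preenveloping. Special $\mathcal{I}$-precover of $C$: $i:X\to C$ in $\mathcal{I}$ with $\mathbb{E}$-triangles $A\to B\to C\overset{\delta}{\dashrightarrow}$, $A'\to X\xrightarrow{i}C\overset{\delta'}{\dashrightarrow}$ and a morphism $(j,b,\mathrm{id}_C)$, $j\in\mathcal{I}^{\perp_{\mathbb{E}}}$. Special $\mathcal{J}$-preenvelope of $A$: $e:A\to X$ in $\mathcal{J}$ with $\mathbb{E}$-triangles $A\xrightarrow{e}X\to Y\overset{\delta}{\dashrightarrow}$, $A\to B\to C\overset{\delta'}{\dashrightarrow}$ and a morphism $(\mathrm{id}_A,b,j)$, $j\in{}^{\perp_{\mathbb{E}}}\mathcal{J}$. Special precovering/preenveloping ideal: every object has one. *)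

theory Defs
  imports "HOL-Algebra.Group"
begin

section \<open>Extriangulated categories (Nakaoka--Palu), concretely encoded\<close>

text \<open>
  Objects have type 'o, morphisms type 'm, extensions (elements of E(C,A)) type 'e.
  Every morphism has a unique source and target.  cmp g f is the composite g o f.
  homg X A B is the abelian group Hom(A,B) (group operation written multiplicatively
  in HOL-Algebra, meaning addition).  extg X C A is the abelian group E(C,A).
  pushE X C a d = a_* d  (d in E(C,A), a : A -> A'),
  pullE X A c d = c^* d  (d in E(C,A), c : C' -> C).
  rlz X C A d x y means: the sequence A -x-> B -y-> C belongs to the equivalence
  class s(d), for d in E(C,A).
\<close>

record ('o,'m,'e) extri_data =
  ob :: "'o set"
  mor :: "'m set"
  src :: "'m \<Rightarrow> 'o"
  tgt :: "'m \<Rightarrow> 'o"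
  cmp :: "'m \<Rightarrow> 'm \<Rightarrow> 'm"
  idm :: "'o \<Rightarrow> 'm"
  homg :: "'o \<Rightarrow> 'o \<Rightarrow> 'm monoid"
  extg :: "'o \<Rightarrow> 'o \<Rightarrow> 'e monoid"
  pushE :: "'o \<Rightarrow> 'm \<Rightarrow> 'e \<Rightarrow> 'e"
  pullE :: "'o \<Rightarrow> 'm \<Rightarrow> 'e \<Rightarrow> 'e"
  rlz :: "'o \<Rightarrow> 'o \<Rightarrow> 'e \<Rightarrow> 'm \<Rightarrow> 'm \<Rightarrow> bool"

definition morph :: "('o,'m,'e) extri_data \<Rightarrow> 'o \<Rightarrow> 'o \<Rightarrow> 'm set" where
  "morph X A B = {f \<in> mor X. src X f = A \<and> tgt X f = B}"

definition Ext :: "('o,'m,'e) extri_data \<Rightarrow> 'o \<Rightarrow> 'o \<Rightarrow> 'e set" where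
  "Ext X C A = carrier (extg X C A)"

definition hadd :: "('o,'m,'e) extri_data \<Rightarrow> 'm \<Rightarrow> 'm \<Rightarrow> 'm" where
  "hadd X f g = f \<otimes>\<^bsub>homg X (src X f) (tgt X f)\<^esub> g"

definition hzero :: "('o,'m,'e) extri_data \<Rightarrow> 'o \<Rightarrow> 'o \<Rightarrow> 'm" where
  "hzero X A B = \<one>\<^bsub>homg X A B\<^esub>"

definition eadd :: "('o,'m,'e) extri_data \<Rightarrow> 'o \<Rightarrow> 'o \<Rightarrow> 'e \<Rightarrow> 'e \<Rightarrow> 'e" where
  "eadd X C A d d' = d \<otimes>\<^bsub>extg X C A\<^esub> d'"

definition ezero :: "('o,'m,'e) extri_data \<Rightarrow> 'o \<Rightarrow> 'o \<Rightarrow> 'e" where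
  "ezero X C A = \<one>\<^bsub>extg X C A\<^esub>"

definition is_category :: "('o,'m,'e) extri_data \<Rightarrow> bool" where
  "is_category X \<longleftrightarrow>
     (\<forall>f\<in>mor X. src X f \<in> ob X \<and> tgt X f \<in> ob X) \<and>
     (\<forall>A\<in>ob X. idm X A \<in> morph X A A) \<and>
     (\<forall>A B C f g. f \<in> morph X A B \<longrightarrow> g \<in> morph X B C \<longrightarrow> cmp X g f \<in> morph X A C) \<and>
     (\<forall>A B f. f \<in> morph X A B \<longrightarrow> cmp X (idm X B) f = f \<and> cmp X f (idm X A) = f) \<and>
     (\<forall>A B C D f g h. f \<in> morph X A B \<longrightarrow> g \<in> morph X B C \<longrightarrow> h \<in> morph X C D \<longrightarrow>
        cmp X h (cmp X g f) = cmp X (cmp X h g) f)"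

definition is_preadditive :: "('o,'m,'e) extri_data \<Rightarrow> bool" where
  "is_preadditive X \<longleftrightarrow>
     (\<forall>A\<in>ob X. \<forall>B\<in>ob X. comm_group (homg X A B) \<and> carrier (homg X A B) = morph X A B) \<and>
     (\<forall>A B C f f' g. f \<in> morph X A B \<longrightarrow> f' \<in> morph X A B \<longrightarrow> g \<in> morph X B C \<longrightarrow>
        cmp X g (hadd X f f') = hadd X (cmp X g f) (cmp X g f')) \<and>
     (\<forall>A B C f f' h. f \<in> morph X A B \<longrightarrow> f' \<in> morph X A B \<longrightarrow> h \<in> morph X C A \<longrightarrow>
        cmp X (hadd X f f') h = hadd X (cmp X f h) (cmp X f' h))"

definition is_zero_object :: "('o,'m,'e) extri_data \<Rightarrow> 'o \<Rightarrow> bool" where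
  "is_zero_object X Z \<longleftrightarrow> Z \<in> ob X \<and>
     (\<forall>A\<in>ob X. (\<exists>!f. f \<in> morph X Z A) \<and> (\<exists>!f. f \<in> morph X A Z))"

definition biprod :: "('o,'m,'e) extri_data \<Rightarrow> 'o \<Rightarrow> 'o \<Rightarrow> 'o \<Rightarrow> 'm \<Rightarrow> 'm \<Rightarrow> 'm \<Rightarrow> 'm \<Rightarrow> bool" where
  "biprod X A1 A2 S i1 i2 p1 p2 \<longleftrightarrow> S \<in> ob X \<and>
     i1 \<in> morph X A1 S \<and> i2 \<in> morph X A2 S \<and> p1 \<in> morph X S A1 \<and> p2 \<in> morph X S A2 \<and>
     cmp X p1 i1 = idm X A1 \<and> cmp X p2 i2 = idm X A2 \<and>
     cmp X p1 i2 = hzero X A2 A1 \<and> cmp X p2 i1 = hzero X A1 A2 \<and>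
     hadd X (cmp X i1 p1) (cmp X i2 p2) = idm X S"

definition is_additive :: "('o,'m,'e) extri_data \<Rightarrow> bool" where
  "is_additive X \<longleftrightarrow> is_category X \<and> is_preadditive X \<and> (\<exists>Z. is_zero_object X Z) \<and>
     (\<forall>A1\<in>ob X. \<forall>A2\<in>ob X. \<exists>S i1 i2 p1 p2. biprod X A1 A2 S i1 i2 p1 p2)"

definition ET1 :: "('o,'m,'e) extri_data \<Rightarrow> bool" where
  "ET1 X \<longleftrightarrow>
     (\<forall>C\<in>ob X. \<forall>A\<in>ob X. comm_group (extg X C A)) \<and>
     (\<forall>C A A' a. C \<in> ob X \<longrightarrow> a \<in> morph X A A' \<longrightarrow>
        pushE X C a \<in> hom (extg X C A) (extg X C A')) \<and>
     (\<forall>A C C' c. A \<in> ob X \<longrightarrow> c \<in> morph X C' C \<longrightarrow>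
        pullE X A c \<in> hom (extg X C A) (extg X C' A)) \<and>
     (\<forall>C A d. C \<in> ob X \<longrightarrow> A \<in> ob X \<longrightarrow> d \<in> Ext X C A \<longrightarrow>
        pushE X C (idm X A) d = d \<and> pullE X A (idm X C) d = d) \<and>
     (\<forall>C A A' A'' a a' d. C \<in> ob X \<longrightarrow> a \<in> morph X A A' \<longrightarrow> a' \<in> morph X A' A'' \<longrightarrow>
        d \<in> Ext X C A \<longrightarrow> pushE X C (cmp X a' a) d = pushE X C a' (pushE X C a d)) \<and>
     (\<forall>A C C' C'' c c' d. A \<in> ob X \<longrightarrow> c \<in> morph X C' C \<longrightarrow> c' \<in> morph X C'' C' \<longrightarrow>
        d \<in> Ext X C A \<longrightarrow> pullE X A (cmp X c c') d = pullE X A c' (pullE X A c d)) \<and>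
     (\<forall>A A' C C' a c d. a \<in> morph X A A' \<longrightarrow> c \<in> morph X C' C \<longrightarrow> d \<in> Ext X C A \<longrightarrow>
        pullE X A' c (pushE X C a d) = pushE X C' a (pullE X A c d)) \<and>
     (\<forall>C A A' a b d. C \<in> ob X \<longrightarrow> a \<in> morph X A A' \<longrightarrow> b \<in> morph X A A' \<longrightarrow> d \<in> Ext X C A \<longrightarrow>
        pushE X C (hadd X a b) d = eadd X C A' (pushE X C a d) (pushE X C b d)) \<and>
     (\<forall>A C C' c c2 d. A \<in> ob X \<longrightarrow> c \<in> morph X C' C \<longrightarrow> c2 \<in> morph X C' C \<longrightarrow> d \<in> Ext X C A \<longrightarrow>
        pullE X A (hadd X c c2) d = eadd X C' A (pullE X A c d) (pullE X A c2 d))"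

definition is_iso :: "('o,'m,'e) extri_data \<Rightarrow> 'o \<Rightarrow> 'o \<Rightarrow> 'm \<Rightarrow> bool" where
  "is_iso X B B' b \<longleftrightarrow> b \<in> morph X B B' \<and>
     (\<exists>b'. b' \<in> morph X B' B \<and> cmp X b' b = idm X B \<and> cmp X b b' = idm X B')"

definition seq_equiv :: "('o,'m,'e) extri_data \<Rightarrow> 'o \<Rightarrow> 'o \<Rightarrow> 'm \<Rightarrow> 'm \<Rightarrow> 'm \<Rightarrow> 'm \<Rightarrow> bool" where
  "seq_equiv X A C x y x' y' \<longleftrightarrow> (\<exists>B B' b.
     x \<in> morph X A B \<and> y \<in> morph X B C \<and> x' \<in> morph X A B' \<and> y' \<in> morph X B' C \<and>
     is_iso X B B' b \<and> cmp X b x = x' \<and> cmp X y' b = y)"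

definition etri :: "('o,'m,'e) extri_data \<Rightarrow> 'o \<Rightarrow> 'o \<Rightarrow> 'o \<Rightarrow> 'm \<Rightarrow> 'm \<Rightarrow> 'e \<Rightarrow> bool" where
  "etri X A B C x y d \<longleftrightarrow> A \<in> ob X \<and> C \<in> ob X \<and> d \<in> Ext X C A \<and>
     x \<in> morph X A B \<and> y \<in> morph X B C \<and> rlz X C A d x y"

definition tri_mor :: "('o,'m,'e) extri_data \<Rightarrow> 'o \<Rightarrow> 'o \<Rightarrow> 'o \<Rightarrow> 'm \<Rightarrow> 'm \<Rightarrow> 'e \<Rightarrow>
    'o \<Rightarrow> 'o \<Rightarrow> 'o \<Rightarrow> 'm \<Rightarrow> 'm \<Rightarrow> 'e \<Rightarrow> 'm \<Rightarrow> 'm \<Rightarrow> 'm \<Rightarrow> bool" where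
  "tri_mor X A B C x y d A' B' C' x' y' d' a b c \<longleftrightarrow>
     a \<in> morph X A A' \<and> b \<in> morph X B B' \<and> c \<in> morph X C C' \<and>
     cmp X b x = cmp X x' a \<and> cmp X c y = cmp X y' b \<and> pushE X C a d = pullE X A' c d'"

definition is_realization :: "('o,'m,'e) extri_data \<Rightarrow> bool" where
  "is_realization X \<longleftrightarrow>
     (\<forall>C\<in>ob X. \<forall>A\<in>ob X. \<forall>d\<in>Ext X C A.
        (\<exists>x y. rlz X C A d x y) \<and>
        (\<forall>x y. rlz X C A d x y \<longrightarrow> (\<exists>B\<in>ob X. x \<in> morph X A B \<and> y \<in> morph X B C)) \<and>
        (\<forall>x y x' y'. rlz X C A d x y \<longrightarrow> (rlz X C A d x' y' \<longleftrightarrow> seq_equiv X A C x y x' y'))) \<and>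
     (\<forall>A B C x y d A' B' C' x' y' d' a c.
        etri X A B C x y d \<longrightarrow> etri X A' B' C' x' y' d' \<longrightarrow>
        a \<in> morph X A A' \<longrightarrow> c \<in> morph X C C' \<longrightarrow> pushE X C a d = pullE X A' c d' \<longrightarrow>
        (\<exists>b\<in>morph X B B'. cmp X b x = cmp X x' a \<and> cmp X c y = cmp X y' b))"

definition is_additive_realization :: "('o,'m,'e) extri_data \<Rightarrow> bool" where
  "is_additive_realization X \<longleftrightarrow>
     (\<forall>A C S iA iC pA pC. A \<in> ob X \<longrightarrow> C \<in> ob X \<longrightarrow> biprod X A C S iA iC pA pC \<longrightarrow>
        rlz X C A (ezero X C A) iA pC) \<and>
     (\<forall>A B C x y d A' B' C' x' y' d' SA iA iA' pA pA' SB iB iB' pB pB' SC iC iC' pC pC'.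
        etri X A B C x y d \<longrightarrow> etri X A' B' C' x' y' d' \<longrightarrow>
        biprod X A A' SA iA iA' pA pA' \<longrightarrow> biprod X B B' SB iB iB' pB pB' \<longrightarrow>
        biprod X C C' SC iC iC' pC pC' \<longrightarrow>
        rlz X SC SA
          (eadd X SC SA (pushE X SC iA (pullE X A pC d)) (pushE X SC iA' (pullE X A' pC' d')))
          (hadd X (cmp X iB (cmp X x pA)) (cmp X iB' (cmp X x' pA')))
          (hadd X (cmp X iC (cmp X y pB)) (cmp X iC' (cmp X y' pB'))))"

definition ET3 :: "('o,'m,'e) extri_data \<Rightarrow> bool" where
  "ET3 X \<longleftrightarrow> (\<forall>A B C x y d A' B' C' x' y' d' a b.
     etri X A B C x y d \<longrightarrow> etri X A' B' C' x' y' d' \<longrightarrow>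
     a \<in> morph X A A' \<longrightarrow> b \<in> morph X B B' \<longrightarrow> cmp X b x = cmp X x' a \<longrightarrow>
     (\<exists>c\<in>morph X C C'. cmp X c y = cmp X y' b \<and> pushE X C a d = pullE X A' c d'))"

definition ET3op :: "('o,'m,'e) extri_data \<Rightarrow> bool" where
  "ET3op X \<longleftrightarrow> (\<forall>A B C x y d A' B' C' x' y' d' b c.
     etri X A B C x y d \<longrightarrow> etri X A' B' C' x' y' d' \<longrightarrow>
     b \<in> morph X B B' \<longrightarrow> c \<in> morph X C C' \<longrightarrow> cmp X c y = cmp X y' b \<longrightarrow>
     (\<exists>a\<in>morph X A A'. cmp X b x = cmp X x' a \<and> pushE X C a d = pullE X A' c d'))"

definition ET4 :: "('o,'m,'e) extri_data \<Rightarrow> bool" where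
  "ET4 X \<longleftrightarrow> (\<forall>A B D f f' d C F g g' d'.
     etri X A B D f f' d \<longrightarrow> etri X B C F g g' d' \<longrightarrow>
     (\<exists>E h h' dd e d''.
        etri X A C E h h' d'' \<and> etri X D E F dd e (pushE X F f' d') \<and>
        cmp X g f = h \<and> cmp X dd f' = cmp X h' g \<and> cmp X e h' = g' \<and>
        pullE X A dd d'' = d \<and> pushE X E f d'' = pullE X B e d'))"

definition ET4op :: "('o,'m,'e) extri_data \<Rightarrow> bool" where
  "ET4op X \<longleftrightarrow> (\<forall>D A B f' f d F C g' g d'.
     etri X D A B f' f d \<longrightarrow> etri X F B C g' g d' \<longrightarrow>
     (\<exists>E dd e h' h d''.
        etri X D E F dd e (pullE X D g' d) \<and> etri X E A C h' h d'' \<and>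
        cmp X h' dd = f' \<and> cmp X f h' = cmp X g' e \<and> cmp X g f = h \<and>
        pushE X C e d'' = d' \<and> pushE X B dd d = pullE X E g d''))"

definition extriangulated :: "('o,'m,'e) extri_data \<Rightarrow> bool" where
  "extriangulated X \<longleftrightarrow> is_additive X \<and> ET1 X \<and> is_realization X \<and>
     is_additive_realization X \<and> ET3 X \<and> ET3op X \<and> ET4 X \<and> ET4op X"

definition injective_obj :: "('o,'m,'e) extri_data \<Rightarrow> 'o \<Rightarrow> bool" where
  "injective_obj X I \<longleftrightarrow> I \<in> ob X \<and> (\<forall>C\<in>ob X. Ext X C I = {ezero X C I})"

definition projective_obj :: "('o,'m,'e) extri_data \<Rightarrow> 'o \<Rightarrow> bool" where
  "projective_obj X P \<longleftrightarrow> P \<in> ob X \<and> (\<forall>A\<in>ob X. Ext X P A = {ezero X P A})"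

definition enough_injectives :: "('o,'m,'e) extri_data \<Rightarrow> bool" where
  "enough_injectives X \<longleftrightarrow> (\<forall>A\<in>ob X. \<exists>I C x y d. injective_obj X I \<and> etri X A I C x y d)"

definition enough_projectives :: "('o,'m,'e) extri_data \<Rightarrow> bool" where
  "enough_projectives X \<longleftrightarrow> (\<forall>C\<in>ob X. \<exists>K P x y d. projective_obj X P \<and> etri X K P C x y d)"

definition is_ideal :: "('o,'m,'e) extri_data \<Rightarrow> 'm set \<Rightarrow> bool" where
  "is_ideal X M \<longleftrightarrow> M \<subseteq> mor X \<and>
     (\<forall>A\<in>ob X. \<forall>B\<in>ob X. hzero X A B \<in> M) \<and>
     (\<forall>A B f g. f \<in> M \<longrightarrow> g \<in> M \<longrightarrow> f \<in> morph X A B \<longrightarrow> g \<in> morph X A B \<longrightarrow> hadd X f g \<in> M) \<and>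
     (\<forall>A B C f g. f \<in> M \<longrightarrow> f \<in> morph X A B \<longrightarrow> g \<in> morph X B C \<longrightarrow> cmp X g f \<in> M) \<and>
     (\<forall>A B C f h. f \<in> M \<longrightarrow> f \<in> morph X A B \<longrightarrow> h \<in> morph X C A \<longrightarrow> cmp X f h \<in> M)"

definition additive_subfunctor :: "('o,'m,'e) extri_data \<Rightarrow> ('o \<Rightarrow> 'o \<Rightarrow> 'e set) \<Rightarrow> bool" where
  "additive_subfunctor X F \<longleftrightarrow>
     (\<forall>C\<in>ob X. \<forall>A\<in>ob X. subgroup (F C A) (extg X C A)) \<and>
     (\<forall>C A A' a d. C \<in> ob X \<longrightarrow> a \<in> morph X A A' \<longrightarrow> d \<in> F C A \<longrightarrow> pushE X C a d \<in> F C A') \<and>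
     (\<forall>A C C' c d. A \<in> ob X \<longrightarrow> c \<in> morph X C' C \<longrightarrow> d \<in> F C A \<longrightarrow> pullE X A c d \<in> F C' A)"

definition Ftri :: "('o,'m,'e) extri_data \<Rightarrow> ('o \<Rightarrow> 'o \<Rightarrow> 'e set) \<Rightarrow> 'o \<Rightarrow> 'o \<Rightarrow> 'o \<Rightarrow> 'm \<Rightarrow> 'm \<Rightarrow> 'e \<Rightarrow> bool" where
  "Ftri X F A B C x y d \<longleftrightarrow> etri X A B C x y d \<and> d \<in> F C A"

definition Ph :: "('o,'m,'e) extri_data \<Rightarrow> ('o \<Rightarrow> 'o \<Rightarrow> 'e set) \<Rightarrow> 'm set" where
  "Ph X F = {\<phi> \<in> mor X. \<forall>A\<in>ob X. \<forall>d\<in>Ext X (tgt X \<phi>) A. pullE X A \<phi> d \<in> F (src X \<phi>) A}"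

definition Coph :: "('o,'m,'e) extri_data \<Rightarrow> ('o \<Rightarrow> 'o \<Rightarrow> 'e set) \<Rightarrow> 'm set" where
  "Coph X F = {\<psi> \<in> mor X. \<forall>C\<in>ob X. \<forall>d\<in>Ext X C (src X \<psi>). pushE X C \<psi> d \<in> F C (tgt X \<psi>)}"

definition F_inj :: "('o,'m,'e) extri_data \<Rightarrow> ('o \<Rightarrow> 'o \<Rightarrow> 'e set) \<Rightarrow> 'm set" where
  "F_inj X F = {i \<in> mor X. \<forall>C\<in>ob X. \<forall>d\<in>F C (src X i). pushE X C i d = ezero X C (tgt X i)}"

definition F_proj :: "('o,'m,'e) extri_data \<Rightarrow> ('o \<Rightarrow> 'o \<Rightarrow> 'e set) \<Rightarrow> 'm set" where
  "F_proj X F = {p \<in> mor X. \<forall>A\<in>ob X. \<forall>d\<in>F (tgt X p) A. pullE X A p d = ezero X (src X p) A}"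

definition upstar :: "('o,'m,'e) extri_data \<Rightarrow> 'm set \<Rightarrow> 'o \<Rightarrow> 'o \<Rightarrow> 'e set" where
  "upstar X M C' A = {pullE X A i d | i C d. i \<in> M \<and> i \<in> morph X C' C \<and> A \<in> ob X \<and> d \<in> Ext X C A}"

definition lowstar :: "('o,'m,'e) extri_data \<Rightarrow> 'm set \<Rightarrow> 'o \<Rightarrow> 'o \<Rightarrow> 'e set" where
  "lowstar X M C A' = {pushE X C j d | j A d. j \<in> M \<and> j \<in> morph X A A' \<and> C \<in> ob X \<and> d \<in> Ext X C A}"

definition enough_spec_inj :: "('o,'m,'e) extri_data \<Rightarrow> ('o \<Rightarrow> 'o \<Rightarrow> 'e set) \<Rightarrow> bool" where
  "enough_spec_inj X F \<longleftrightarrow> (\<forall>A\<in>ob X. \<exists>B C e y d B' C' x' y' d' b \<phi>.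
     Ftri X F A B C e y d \<and> e \<in> F_inj X F \<and> etri X A B' C' x' y' d' \<and>
     tri_mor X A B C e y d A B' C' x' y' d' (idm X A) b \<phi> \<and> \<phi> \<in> Ph X F)"

definition enough_spec_proj :: "('o,'m,'e) extri_data \<Rightarrow> ('o \<Rightarrow> 'o \<Rightarrow> 'e set) \<Rightarrow> bool" where
  "enough_spec_proj X F \<longleftrightarrow> (\<forall>C\<in>ob X. \<exists>K B x p d K' B' x' y' d' \<psi> b.
     Ftri X F K B C x p d \<and> p \<in> F_proj X F \<and> etri X K' B' C x' y' d' \<and>
     tri_mor X K' B' C x' y' d' K B C x p d \<psi> b (idm X C) \<and> \<psi> \<in> Coph X F)"

definition perp_right :: "('o,'m,'e) extri_data \<Rightarrow> 'm set \<Rightarrow> 'm set" where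
  "perp_right X M = {g \<in> mor X. \<forall>m\<in>M. \<forall>d\<in>Ext X (tgt X m) (src X g).
     pullE X (tgt X g) m (pushE X (tgt X m) g d) = ezero X (src X m) (tgt X g)}"

definition perp_left :: "('o,'m,'e) extri_data \<Rightarrow> 'm set \<Rightarrow> 'm set" where
  "perp_left X M = {g \<in> mor X. \<forall>m\<in>M. \<forall>d\<in>Ext X (tgt X g) (src X m).
     pullE X (tgt X m) g (pushE X (tgt X g) m d) = ezero X (src X g) (tgt X m)}"

definition cotorsion_pair :: "('o,'m,'e) extri_data \<Rightarrow> 'm set \<Rightarrow> 'm set \<Rightarrow> bool" where
  "cotorsion_pair X I J \<longleftrightarrow> is_ideal X I \<and> is_ideal X J \<and> I = perp_left X J \<and> J = perp_right X I"

definition spec_precover :: "('o,'m,'e) extri_data \<Rightarrow> 'm set \<Rightarrow> 'o \<Rightarrow> 'm \<Rightarrow> bool" where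
  "spec_precover X I C i \<longleftrightarrow> i \<in> I \<and> tgt X i = C \<and>
     (\<exists>A B x y d A' x' d' j b.
        etri X A B C x y d \<and> etri X A' (src X i) C x' i d' \<and>
        tri_mor X A B C x y d A' (src X i) C x' i d' j b (idm X C) \<and> j \<in> perp_right X I)"

definition spec_precovering :: "('o,'m,'e) extri_data \<Rightarrow> 'm set \<Rightarrow> bool" where
  "spec_precovering X I \<longleftrightarrow> (\<forall>C\<in>ob X. \<exists>i. spec_precover X I C i)"

definition spec_preenvelope :: "('o,'m,'e) extri_data \<Rightarrow> 'm set \<Rightarrow> 'o \<Rightarrow> 'm \<Rightarrow> bool" where
  "spec_preenvelope X J A e \<longleftrightarrow> e \<in> J \<and> src X e = A \<and>
     (\<exists>Y y d B C x' y' d' b j.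
        etri X A (tgt X e) Y e y d \<and> etri X A B C x' y' d' \<and>
        tri_mor X A (tgt X e) Y e y d A B C x' y' d' (idm X A) b j \<and> j \<in> perp_left X J)"

definition spec_preenveloping :: "('o,'m,'e) extri_data \<Rightarrow> 'm set \<Rightarrow> bool" where
  "spec_preenveloping X J \<longleftrightarrow> (\<forall>A\<in>ob X. \<exists>e. spec_preenvelope X J A e)"

definition complete_cotorsion_pair :: "('o,'m,'e) extri_data \<Rightarrow> 'm set \<Rightarrow> 'm set \<Rightarrow> bool" where
  "complete_cotorsion_pair X I J \<longleftrightarrow> cotorsion_pair X I J \<and>
     spec_precovering X I \<and> spec_preenveloping X J"

end

theory Submission
  imports Defs
begin

(* Salce's argument does the work. With enough injectives, pull an injective-hull triangle
   A \<rightarrow> E \<rightarrow> C back along a special I-precover of C: the resulting inflation out of A is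
   orthogonal to I (as E is injective, every extension with end term A is pulled back from C,
   and maps in I into C factor through the precover), so it is a special J-preenvelope; dually with enough projectives.
   Hence (2) and (7) are each equivalent to completeness. The remaining conditions are
   reformulations: Ph(F) and F-inj are orthogonal for every F, so any F with
   I^* \<subseteq> F \<subseteq> Ker J_* has Ph(F) = I and F-inj = J, and special J-preenvelopes are then the
   special F-injective inflations; dually for J_* \<subseteq> F \<subseteq> Ker I^*. *)

lemma subgroup_common_kernel:
  assumes G: "group G"
    and H: "\<And>k. P k \<Longrightarrow> group (H k)" and h: "\<And>k. P k \<Longrightarrow> h k \<in> hom G (H k)"
  shows "subgroup {x \<in> carrier G. \<forall>k. P k \<longrightarrow> h k x = \<one>\<^bsub>H k\<^esub>} G"
proof -
  interpret G: group G by (rule G)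
  have hom: "group_hom G (H k) (h k)" if "P k" for k
    using G H h that by (simp add: group_hom_def group_hom_axioms_def)
  show ?thesis
  proof (rule G.subgroupI)
    show "{x \<in> carrier G. \<forall>k. P k \<longrightarrow> h k x = \<one>\<^bsub>H k\<^esub>} \<noteq> {}"
      using group_hom.hom_one[OF hom] by blast
  qed (auto simp: group_hom.hom_inv[OF hom] group_hom.hom_mult[OF hom] H group.is_monoid
      monoid.inv_one)
qed

definition ext_orth :: "('o,'m,'e) extri_data \<Rightarrow> 'm \<Rightarrow> 'm \<Rightarrow> bool" where
  "ext_orth X m g \<longleftrightarrow> (\<forall>d\<in>Ext X (tgt X m) (src X g).
     pullE X (tgt X g) m (pushE X (tgt X m) g d) = ezero X (src X m) (tgt X g))"

lemma perp_right_ext_orth: "perp_right X M = {g \<in> mor X. \<forall>m\<in>M. ext_orth X m g}"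
  unfolding perp_right_def ext_orth_def by blast

lemma perp_left_ext_orth: "perp_left X M = {g \<in> mor X. \<forall>m\<in>M. ext_orth X g m}"
  unfolding perp_left_def ext_orth_def by blast

lemma perp_right_antimono: "M \<subseteq> N \<Longrightarrow> perp_right X N \<subseteq> perp_right X M"
  unfolding perp_right_ext_orth by blast

lemma perp_left_antimono: "M \<subseteq> N \<Longrightarrow> perp_left X N \<subseteq> perp_left X M"
  unfolding perp_left_ext_orth by blast

(* The largest F with J \<subseteq> F-inj, resp. I \<subseteq> F-proj. *)
definition ker_lowstar :: "('o,'m,'e) extri_data \<Rightarrow> 'm set \<Rightarrow> 'o \<Rightarrow> 'o \<Rightarrow> 'e set" where
  "ker_lowstar X J C A = {d \<in> Ext X C A.
     \<forall>k. k \<in> J \<and> src X k = A \<longrightarrow> pushE X C k d = ezero X C (tgt X k)}"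

definition ker_upstar :: "('o,'m,'e) extri_data \<Rightarrow> 'm set \<Rightarrow> 'o \<Rightarrow> 'o \<Rightarrow> 'e set" where
  "ker_upstar X I C A = {d \<in> Ext X C A.
     \<forall>i. i \<in> I \<and> tgt X i = C \<longrightarrow> pullE X A i d = ezero X (src X i) A}"

lemma ideal_mor: "is_ideal X M \<Longrightarrow> f \<in> M \<Longrightarrow> f \<in> mor X"
  unfolding is_ideal_def by blast

lemma ideal_cmp_left: "is_ideal X M \<Longrightarrow> f \<in> M \<Longrightarrow> f \<in> morph X A B \<Longrightarrow> g \<in> morph X B C \<Longrightarrow> cmp X g f \<in> M"
  unfolding is_ideal_def by blast

lemma ideal_cmp_right: "is_ideal X M \<Longrightarrow> f \<in> M \<Longrightarrow> f \<in> morph X A B \<Longrightarrow> h \<in> morph X C A \<Longrightarrow> cmp X f h \<in> M"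
  unfolding is_ideal_def by blast

locale extriangulated_category =
  fixes X :: "('o,'m,'e) extri_data"
  assumes extriangulated: "extriangulated X"
begin

lemma morphD:
  assumes "f \<in> morph X A B"
  shows "A \<in> ob X" "B \<in> ob X" "f \<in> mor X" "src X f = A" "tgt X f = B"
  using assms extriangulated
  unfolding extriangulated_def is_additive_def is_category_def morph_def by auto

lemma mor_morph: "f \<in> mor X \<Longrightarrow> f \<in> morph X (src X f) (tgt X f)"
  unfolding morph_def by simp

lemma mor_ob: "f \<in> mor X \<Longrightarrow> src X f \<in> ob X \<and> tgt X f \<in> ob X"
  using morphD mor_morph by blast

lemma id_morph: "A \<in> ob X \<Longrightarrow> idm X A \<in> morph X A A"
  using extriangulated unfolding extriangulated_def is_additive_def is_category_def by blast

lemma cmp_morph: "f \<in> morph X A B \<Longrightarrow> g \<in> morph X B C \<Longrightarrow> cmp X g f \<in> morph X A C"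
  using extriangulated unfolding extriangulated_def is_additive_def is_category_def by blast

lemma cmp_id_left: "f \<in> morph X A B \<Longrightarrow> cmp X (idm X B) f = f"
  using extriangulated unfolding extriangulated_def is_additive_def is_category_def by blast

lemma cmp_id_right: "f \<in> morph X A B \<Longrightarrow> cmp X f (idm X A) = f"
  using extriangulated unfolding extriangulated_def is_additive_def is_category_def by blast

lemma cmp_assoc:
  "f \<in> morph X A B \<Longrightarrow> g \<in> morph X B C \<Longrightarrow> h \<in> morph X C D \<Longrightarrow>
    cmp X h (cmp X g f) = cmp X (cmp X h g) f"
  using extriangulated unfolding extriangulated_def is_additive_def is_category_def by blast

lemma ext_group: "C \<in> ob X \<Longrightarrow> A \<in> ob X \<Longrightarrow> group (extg X C A)"
  using extriangulated unfolding extriangulated_def ET1_def by (simp add: comm_group.axioms(2))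

lemma push_hom: "C \<in> ob X \<Longrightarrow> a \<in> morph X A A' \<Longrightarrow> pushE X C a \<in> hom (extg X C A) (extg X C A')"
  using extriangulated unfolding extriangulated_def ET1_def by simp

lemma pull_hom: "A \<in> ob X \<Longrightarrow> c \<in> morph X C' C \<Longrightarrow> pullE X A c \<in> hom (extg X C A) (extg X C' A)"
  using extriangulated unfolding extriangulated_def ET1_def by simp

lemma push_Ext: "C \<in> ob X \<Longrightarrow> a \<in> morph X A A' \<Longrightarrow> d \<in> Ext X C A \<Longrightarrow> pushE X C a d \<in> Ext X C A'"
  unfolding Ext_def by (rule hom_in_carrier[OF push_hom])

lemma pull_Ext: "A \<in> ob X \<Longrightarrow> c \<in> morph X C' C \<Longrightarrow> d \<in> Ext X C A \<Longrightarrow> pullE X A c d \<in> Ext X C' A"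
  unfolding Ext_def by (rule hom_in_carrier[OF pull_hom])

lemma ezero_Ext: "C \<in> ob X \<Longrightarrow> A \<in> ob X \<Longrightarrow> ezero X C A \<in> Ext X C A"
  unfolding Ext_def ezero_def by (simp add: group.is_monoid ext_group)

lemma push_ezero:
  assumes "C \<in> ob X" "a \<in> morph X A A'"
  shows "pushE X C a (ezero X C A) = ezero X C A'"
  unfolding ezero_def
  using hom_one[OF push_hom[OF assms] ext_group ext_group] assms morphD by blast

lemma pull_ezero:
  assumes "A \<in> ob X" "c \<in> morph X C' C"
  shows "pullE X A c (ezero X C A) = ezero X C' A"
  unfolding ezero_def
  using hom_one[OF pull_hom[OF assms] ext_group ext_group] assms morphD by blast

lemma push_id: "C \<in> ob X \<Longrightarrow> A \<in> ob X \<Longrightarrow> d \<in> Ext X C A \<Longrightarrow> pushE X C (idm X A) d = d"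
  using extriangulated unfolding extriangulated_def ET1_def by simp

lemma pull_id: "C \<in> ob X \<Longrightarrow> A \<in> ob X \<Longrightarrow> d \<in> Ext X C A \<Longrightarrow> pullE X A (idm X C) d = d"
  using extriangulated unfolding extriangulated_def ET1_def by simp

lemma push_cmp:
  "C \<in> ob X \<Longrightarrow> a \<in> morph X A A' \<Longrightarrow> a' \<in> morph X A' A'' \<Longrightarrow> d \<in> Ext X C A \<Longrightarrow>
    pushE X C (cmp X a' a) d = pushE X C a' (pushE X C a d)"
  using extriangulated unfolding extriangulated_def ET1_def by simp

lemma pull_cmp:
  "A \<in> ob X \<Longrightarrow> c \<in> morph X C' C \<Longrightarrow> c' \<in> morph X C'' C' \<Longrightarrow> d \<in> Ext X C A \<Longrightarrow>
    pullE X A (cmp X c c') d = pullE X A c' (pullE X A c d)"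
  using extriangulated unfolding extriangulated_def ET1_def by simp

lemma pull_push:
  "a \<in> morph X A A' \<Longrightarrow> c \<in> morph X C' C \<Longrightarrow> d \<in> Ext X C A \<Longrightarrow>
    pullE X A' c (pushE X C a d) = pushE X C' a (pullE X A c d)"
  using extriangulated unfolding extriangulated_def ET1_def by simp

lemma etriD:
  assumes "etri X A B C x y d"
  shows "A \<in> ob X" "B \<in> ob X" "C \<in> ob X" "x \<in> morph X A B" "y \<in> morph X B C"
    "d \<in> Ext X C A"
  using assms morphD unfolding etri_def by blast+

lemma etri_exists:
  assumes "C \<in> ob X" "A \<in> ob X" "d \<in> Ext X C A"
  obtains B x y where "etri X A B C x y d"
  using assms extriangulated unfolding extriangulated_def is_realization_def etri_def by metis

lemma etri_morphism_exists:
  assumes "etri X A B C x y d" "etri X A' B' C' x' y' d'"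
    "a \<in> morph X A A'" "c \<in> morph X C C'" "pushE X C a d = pullE X A' c d'"
  obtains b where "b \<in> morph X B B'" "cmp X b x = cmp X x' a" "cmp X c y = cmp X y' b"
  using assms extriangulated unfolding extriangulated_def is_realization_def by metis

lemma ET3_rule:
  assumes "etri X A B C x y d" "etri X A' B' C' x' y' d'"
    "a \<in> morph X A A'" "b \<in> morph X B B'" "cmp X b x = cmp X x' a"
  obtains c where "c \<in> morph X C C'" "cmp X c y = cmp X y' b" "pushE X C a d = pullE X A' c d'"
  using assms extriangulated unfolding extriangulated_def ET3_def by metis

lemma ET3op_rule:
  assumes "etri X A B C x y d" "etri X A' B' C' x' y' d'"
    "b \<in> morph X B B'" "c \<in> morph X C C'" "cmp X c y = cmp X y' b"
  obtains a where "a \<in> morph X A A'" "cmp X b x = cmp X x' a" "pushE X C a d = pullE X A' c d'"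
  using assms extriangulated unfolding extriangulated_def ET3op_def by metis

lemma split_etri:
  assumes "A \<in> ob X" "W \<in> ob X"
  obtains S iA iW pA pW where "biprod X A W S iA iW pA pW" "etri X A S W iA pW (ezero X W A)"
proof -
  obtain S iA iW pA pW where b: "biprod X A W S iA iW pA pW"
    using assms extriangulated unfolding extriangulated_def is_additive_def by blast
  then have "rlz X W A (ezero X W A) iA pW"
    using assms extriangulated unfolding extriangulated_def is_additive_realization_def by blast
  then have "etri X A S W iA pW (ezero X W A)"
    using b assms ezero_Ext unfolding etri_def biprod_def by simp
  with b that show thesis by blast
qed

lemma biprodD:
  assumes "biprod X A1 A2 S i1 i2 p1 p2"
  shows "i1 \<in> morph X A1 S" "i2 \<in> morph X A2 S" "p1 \<in> morph X S A1" "p2 \<in> morph X S A2"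
    "cmp X p1 i1 = idm X A1" "cmp X p2 i2 = idm X A2"
  using assms unfolding biprod_def by auto

(* The next four lemmas compare the given triangle with a split triangle, whose extension
   is zero. *)
lemma etri_push_inflation:
  assumes t: "etri X A B C x y d"
  shows "pushE X C x d = ezero X C B"
proof -
  have B: "B \<in> ob X" using etriD[OF t] by auto
  obtain S i1 i2 p1 p2 where b: "biprod X B B S i1 i2 p1 p2"
    and split: "etri X B S B i1 p2 (ezero X B B)"
    using split_etri[OF B B] .
  obtain c where "c \<in> morph X C B" "pushE X C x d = pullE X B c (ezero X B B)"
    using ET3_rule[OF t split etriD(4)[OF t] biprodD(1)[OF b] refl] .
  then show ?thesis using pull_ezero[OF B] by simp
qed

lemma etri_pull_deflation:
  assumes t: "etri X A B C x y d"
  shows "pullE X A y d = ezero X B A"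
proof -
  have B: "B \<in> ob X" using etriD[OF t] by auto
  obtain S i1 i2 p1 p2 where b: "biprod X B B S i1 i2 p1 p2"
    and split: "etri X B S B i1 p2 (ezero X B B)"
    using split_etri[OF B B] .
  obtain a where "a \<in> morph X B A" "pushE X B a (ezero X B B) = pullE X A y d"
    using ET3op_rule[OF split t biprodD(4)[OF b] etriD(5)[OF t] refl] .
  then show ?thesis using push_ezero[OF B] by simp
qed

lemma etri_lift_through_deflation:
  assumes t: "etri X A B C x y d" and f: "f \<in> morph X W C"
    and vanish: "pullE X A f d = ezero X W A"
  obtains g where "g \<in> morph X W B" "cmp X y g = f"
proof -
  have A: "A \<in> ob X" and W: "W \<in> ob X" using etriD[OF t] morphD[OF f] by auto
  obtain S iA iW pA pW where b: "biprod X A W S iA iW pA pW"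
    and split: "etri X A S W iA pW (ezero X W A)"
    using split_etri[OF A W] .
  have "pushE X W (idm X A) (ezero X W A) = pullE X A f d"
    using vanish push_id[OF W A ezero_Ext[OF W A]] by simp
  then obtain h where h: "h \<in> morph X S B" "cmp X f pW = cmp X y h"
    using etri_morphism_exists[OF split t id_morph[OF A] f] by metis
  have "cmp X y (cmp X h iW) = cmp X (cmp X f pW) iW"
    using cmp_assoc[OF biprodD(2)[OF b] h(1) etriD(5)[OF t]] h(2) by simp
  also have "\<dots> = f"
    using cmp_assoc[OF biprodD(2,4)[OF b] f] biprodD(6)[OF b] cmp_id_right[OF f] by simp
  finally show thesis using that cmp_morph[OF biprodD(2)[OF b] h(1)] by blast
qed

lemma etri_extend_along_inflation:
  assumes t: "etri X A B C x y d" and f: "f \<in> morph X A V"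
    and vanish: "pushE X C f d = ezero X C V"
  obtains g where "g \<in> morph X B V" "cmp X g x = f"
proof -
  have C: "C \<in> ob X" and V: "V \<in> ob X" using etriD[OF t] morphD[OF f] by auto
  obtain S iV iC pV pC where b: "biprod X V C S iV iC pV pC"
    and split: "etri X V S C iV pC (ezero X C V)"
    using split_etri[OF V C] .
  have "pushE X C f d = pullE X V (idm X C) (ezero X C V)"
    using vanish pull_id[OF C V ezero_Ext[OF C V]] by simp
  then obtain h where h: "h \<in> morph X B S" "cmp X h x = cmp X iV f"
    using etri_morphism_exists[OF t split f id_morph[OF C]] by metis
  have "cmp X (cmp X pV h) x = cmp X pV (cmp X iV f)"
    using cmp_assoc[OF etriD(4)[OF t] h(1) biprodD(3)[OF b]] h(2) by simp
  also have "\<dots> = f"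
    using cmp_assoc[OF f biprodD(1,3)[OF b]] biprodD(5)[OF b] cmp_id_left[OF f] by simp
  finally show thesis using that cmp_morph[OF h(1) biprodD(3)[OF b]] by blast
qed

lemma etri_ext_pulled_back:
  assumes t: "etri X A B C x y d" and W: "W \<in> ob X" and d': "d' \<in> Ext X W A"
    and vanish: "pushE X W x d' = ezero X W B"
  obtains w where "w \<in> morph X W C" "d' = pullE X A w d"
proof -
  have A: "A \<in> ob X" using etriD[OF t] by auto
  obtain B' x' y' where t': "etri X A B' W x' y' d'" using etri_exists[OF W A d'] .
  obtain g where g: "g \<in> morph X B' B" "cmp X g x' = cmp X x (idm X A)"
    using etri_extend_along_inflation[OF t' etriD(4)[OF t] vanish]
      cmp_id_right[OF etriD(4)[OF t]] by metis
  obtain w where "w \<in> morph X W C" "pushE X W (idm X A) d' = pullE X A w d"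
    using ET3_rule[OF t' t id_morph[OF A] g] .
  then show thesis using that push_id[OF W A d'] by simp
qed

lemma etri_ext_pushed_forward:
  assumes t: "etri X A B C x y d" and W: "W \<in> ob X" and d': "d' \<in> Ext X C W"
    and vanish: "pullE X W y d' = ezero X B W"
  obtains w where "w \<in> morph X A W" "d' = pushE X C w d"
proof -
  have C: "C \<in> ob X" using etriD[OF t] by auto
  obtain B' x' y' where t': "etri X W B' C x' y' d'" using etri_exists[OF C W d'] .
  obtain h where h: "h \<in> morph X B B'" "cmp X (idm X C) y = cmp X y' h"
    using etri_lift_through_deflation[OF t' etriD(5)[OF t] vanish]
      cmp_id_left[OF etriD(5)[OF t]] by metis
  obtain w where "w \<in> morph X A W" "pushE X C w d = pullE X W (idm X C) d'"
    using ET3op_rule[OF t t' h(1) id_morph[OF C] h(2)] by metis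
  then show thesis using that pull_id[OF C W d'] by simp
qed

lemma etri_pullback:
  assumes t: "etri X A B C x y d" and c: "c \<in> morph X C' C"
  obtains Z x' y' b where "etri X A Z C' x' y' (pullE X A c d)"
    "tri_mor X A Z C' x' y' (pullE X A c d) A B C x y d (idm X A) b c"
proof -
  have A: "A \<in> ob X" and C': "C' \<in> ob X" using etriD[OF t] morphD[OF c] by auto
  have d': "pullE X A c d \<in> Ext X C' A" using pull_Ext[OF A c etriD(6)[OF t]] .
  obtain Z x' y' where t': "etri X A Z C' x' y' (pullE X A c d)"
    using etri_exists[OF C' A d'] .
  have ext: "pushE X C' (idm X A) (pullE X A c d) = pullE X A c d"
    using push_id[OF C' A d'] .
  obtain b where "b \<in> morph X Z B" "cmp X b x' = cmp X x (idm X A)" "cmp X c y' = cmp X y b"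
    using etri_morphism_exists[OF t' t id_morph[OF A] c ext] .
  then show thesis using that t' ext id_morph[OF A] c unfolding tri_mor_def by blast
qed

lemma etri_pushout:
  assumes t: "etri X A B C x y d" and a: "a \<in> morph X A A'"
  obtains Z x' y' b where "etri X A' Z C x' y' (pushE X C a d)"
    "tri_mor X A B C x y d A' Z C x' y' (pushE X C a d) a b (idm X C)"
proof -
  have C: "C \<in> ob X" and A': "A' \<in> ob X" using etriD[OF t] morphD[OF a] by auto
  have d': "pushE X C a d \<in> Ext X C A'" using push_Ext[OF C a etriD(6)[OF t]] .
  obtain Z x' y' where t': "etri X A' Z C x' y' (pushE X C a d)"
    using etri_exists[OF C A' d'] .
  have ext: "pushE X C a d = pullE X A' (idm X C) (pushE X C a d)"
    using pull_id[OF C A' d'] by simp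
  obtain b where "b \<in> morph X B Z" "cmp X b x = cmp X x' a" "cmp X (idm X C) y = cmp X y' b"
    using etri_morphism_exists[OF t t' a id_morph[OF C] ext] .
  then show thesis using that t' ext a id_morph[OF C] unfolding tri_mor_def by blast
qed

lemma tri_mor_id_right_ext:
  assumes "etri X A' B' C x' y' d'"
    and "tri_mor X A B C x y d A' B' C x' y' d' a b (idm X C)"
  shows "d' = pushE X C a d"
  using assms pull_id etriD unfolding tri_mor_def by metis

lemma tri_mor_id_left_ext:
  assumes "etri X A B C x y d"
    and "tri_mor X A B C x y d A B' C' x' y' d' (idm X A) b c"
  shows "d = pullE X A c d'"
  using assms push_id etriD unfolding tri_mor_def by metis

lemma ext_orth_push_pull:
  assumes "m \<in> mor X" "g \<in> mor X"
  shows "ext_orth X m g \<longleftrightarrow> (\<forall>d\<in>Ext X (tgt X m) (src X g).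
    pushE X (src X m) g (pullE X (src X g) m d) = ezero X (src X m) (tgt X g))"
  unfolding ext_orth_def using pull_push[OF mor_morph mor_morph] assms by simp

lemma additive_subfunctor_ker_lowstar:
  assumes J: "is_ideal X J"
  shows "additive_subfunctor X (ker_lowstar X J)"
  unfolding additive_subfunctor_def
proof (intro conjI ballI allI impI)
  fix C A assume C: "C \<in> ob X" and A: "A \<in> ob X"
  have "k \<in> morph X A (tgt X k)" "tgt X k \<in> ob X" if "k \<in> J \<and> src X k = A" for k
    using that mor_morph mor_ob ideal_mor[OF J] by fastforce+
  then show "subgroup (ker_lowstar X J C A) (extg X C A)"
    unfolding ker_lowstar_def Ext_def ezero_def
    by (intro subgroup_common_kernel ext_group push_hom C A) auto
next
  fix C A A' a d assume C: "C \<in> ob X" and a: "a \<in> morph X A A'" and d: "d \<in> ker_lowstar X J C A"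
  have "pushE X C k (pushE X C a d) = ezero X C (tgt X k)" if k: "k \<in> J" "src X k = A'" for k
  proof -
    have km: "k \<in> morph X A' (tgt X k)" using mor_morph ideal_mor[OF J k(1)] k(2) by auto
    have "cmp X k a \<in> J" "cmp X k a \<in> morph X A (tgt X k)"
      using ideal_cmp_right[OF J k(1) km a] cmp_morph[OF a km] .
    then show ?thesis
      using d push_cmp[OF C a km] morphD unfolding ker_lowstar_def by auto
  qed
  then show "pushE X C a d \<in> ker_lowstar X J C A'"
    using d push_Ext[OF C a] unfolding ker_lowstar_def by blast
next
  fix A C C' c d assume A: "A \<in> ob X" and c: "c \<in> morph X C' C" and d: "d \<in> ker_lowstar X J C A"
  have "pushE X C' k (pullE X A c d) = ezero X C' (tgt X k)" if k: "k \<in> J" "src X k = A" for k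
  proof -
    have km: "k \<in> morph X A (tgt X k)" using mor_morph ideal_mor[OF J k(1)] k(2) by auto
    have "pushE X C' k (pullE X A c d) = pullE X (tgt X k) c (pushE X C k d)"
      using pull_push[OF km c] d unfolding ker_lowstar_def by simp
    also have "\<dots> = ezero X C' (tgt X k)"
      using d k pull_ezero[OF morphD(2)[OF km] c] unfolding ker_lowstar_def by simp
    finally show ?thesis .
  qed
  then show "pullE X A c d \<in> ker_lowstar X J C' A"
    using d pull_Ext[OF A c] unfolding ker_lowstar_def by blast
qed

lemma additive_subfunctor_ker_upstar:
  assumes I: "is_ideal X I"
  shows "additive_subfunctor X (ker_upstar X I)"
  unfolding additive_subfunctor_def
proof (intro conjI ballI allI impI)
  fix C A assume C: "C \<in> ob X" and A: "A \<in> ob X"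
  have "i \<in> morph X (src X i) C" "src X i \<in> ob X" if "i \<in> I \<and> tgt X i = C" for i
    using that mor_morph mor_ob ideal_mor[OF I] by fastforce+
  then show "subgroup (ker_upstar X I C A) (extg X C A)"
    unfolding ker_upstar_def Ext_def ezero_def
    by (intro subgroup_common_kernel ext_group pull_hom C A) auto
next
  fix C A A' a d assume C: "C \<in> ob X" and a: "a \<in> morph X A A'" and d: "d \<in> ker_upstar X I C A"
  have "pullE X A' i (pushE X C a d) = ezero X (src X i) A'" if i: "i \<in> I" "tgt X i = C" for i
  proof -
    have im: "i \<in> morph X (src X i) C" using mor_morph ideal_mor[OF I i(1)] i(2) by auto
    have "pullE X A' i (pushE X C a d) = pushE X (src X i) a (pullE X A i d)"
      using pull_push[OF a im] d unfolding ker_upstar_def by simp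
    also have "\<dots> = ezero X (src X i) A'"
      using d i push_ezero[OF morphD(1)[OF im] a] unfolding ker_upstar_def by simp
    finally show ?thesis .
  qed
  then show "pushE X C a d \<in> ker_upstar X I C A'"
    using d push_Ext[OF C a] unfolding ker_upstar_def by blast
next
  fix A C C' c d assume A: "A \<in> ob X" and c: "c \<in> morph X C' C" and d: "d \<in> ker_upstar X I C A"
  have "pullE X A i (pullE X A c d) = ezero X (src X i) A" if i: "i \<in> I" "tgt X i = C'" for i
  proof -
    have im: "i \<in> morph X (src X i) C'" using mor_morph ideal_mor[OF I i(1)] i(2) by auto
    have "cmp X c i \<in> I" "cmp X c i \<in> morph X (src X i) C"
      using ideal_cmp_left[OF I i(1) im c] cmp_morph[OF im c] .
    then show ?thesis
      using d pull_cmp[OF A c im] morphD unfolding ker_upstar_def by auto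
  qed
  then show "pullE X A c d \<in> ker_upstar X I C' A"
    using d pull_Ext[OF A c] unfolding ker_upstar_def by blast
qed

lemma Ph_F_inj_ext_orth:
  assumes \<phi>: "\<phi> \<in> Ph X F" and g: "g \<in> F_inj X F"
  shows "ext_orth X \<phi> g"
proof -
  have m: "\<phi> \<in> mor X" "g \<in> mor X" using \<phi> g unfolding Ph_def F_inj_def by auto
  have "pushE X (src X \<phi>) g (pullE X (src X g) \<phi> d) = ezero X (src X \<phi>) (tgt X g)"
    if d: "d \<in> Ext X (tgt X \<phi>) (src X g)" for d
  proof -
    have "pullE X (src X g) \<phi> d \<in> F (src X \<phi>) (src X g)"
      using \<phi> d mor_ob[OF m(2)] unfolding Ph_def by simp
    then show ?thesis using g mor_ob[OF m(1)] unfolding F_inj_def by simp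
  qed
  then show ?thesis unfolding ext_orth_push_pull[OF m] by blast
qed

lemma F_proj_Coph_ext_orth:
  assumes p: "p \<in> F_proj X F" and g: "g \<in> Coph X F"
  shows "ext_orth X p g"
  unfolding ext_orth_def
proof
  fix d assume d: "d \<in> Ext X (tgt X p) (src X g)"
  have m: "p \<in> mor X" "g \<in> mor X" using p g unfolding F_proj_def Coph_def by auto
  have "pushE X (tgt X p) g d \<in> F (tgt X p) (tgt X g)"
    using g d mor_ob[OF m(1)] unfolding Coph_def by simp
  then show "pullE X (tgt X g) p (pushE X (tgt X p) g d) = ezero X (src X p) (tgt X g)"
    using p mor_ob[OF m(2)] unfolding F_proj_def by simp
qed

lemma F_inj_subset_perp_right_Ph: "F_inj X F \<subseteq> perp_right X (Ph X F)"
proof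
  fix g assume g: "g \<in> F_inj X F"
  then have "g \<in> mor X" unfolding F_inj_def by simp
  with g show "g \<in> perp_right X (Ph X F)"
    unfolding perp_right_ext_orth using Ph_F_inj_ext_orth by blast
qed

lemma Ph_subset_perp_left_F_inj: "Ph X F \<subseteq> perp_left X (F_inj X F)"
proof
  fix g assume g: "g \<in> Ph X F"
  then have "g \<in> mor X" unfolding Ph_def by simp
  with g show "g \<in> perp_left X (F_inj X F)"
    unfolding perp_left_ext_orth using Ph_F_inj_ext_orth by blast
qed

lemma Coph_subset_perp_right_F_proj: "Coph X F \<subseteq> perp_right X (F_proj X F)"
proof
  fix g assume g: "g \<in> Coph X F"
  then have "g \<in> mor X" unfolding Coph_def by simp
  with g show "g \<in> perp_right X (F_proj X F)"
    unfolding perp_right_ext_orth using F_proj_Coph_ext_orth by blast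
qed

lemma F_proj_subset_perp_left_Coph: "F_proj X F \<subseteq> perp_left X (Coph X F)"
proof
  fix g assume g: "g \<in> F_proj X F"
  then have "g \<in> mor X" unfolding F_proj_def by simp
  with g show "g \<in> perp_left X (Coph X F)"
    unfolding perp_left_ext_orth using F_proj_Coph_ext_orth by blast
qed

lemma subset_Ph_if_upstar_le:
  assumes M: "M \<subseteq> mor X" and le: "\<And>C A. upstar X M C A \<subseteq> F C A"
  shows "M \<subseteq> Ph X F"
proof
  fix \<phi> assume \<phi>: "\<phi> \<in> M"
  have "pullE X A \<phi> d \<in> upstar X M (src X \<phi>) A"
    if "A \<in> ob X" "d \<in> Ext X (tgt X \<phi>) A" for A d
    unfolding upstar_def using \<phi> M mor_morph that by blast
  then show "\<phi> \<in> Ph X F" using \<phi> M le unfolding Ph_def by blast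
qed

lemma subset_Coph_if_lowstar_le:
  assumes M: "M \<subseteq> mor X" and le: "\<And>C A. lowstar X M C A \<subseteq> F C A"
  shows "M \<subseteq> Coph X F"
proof
  fix \<psi> assume \<psi>: "\<psi> \<in> M"
  have "pushE X C \<psi> d \<in> lowstar X M C (tgt X \<psi>)"
    if "C \<in> ob X" "d \<in> Ext X C (src X \<psi>)" for C d
    unfolding lowstar_def using \<psi> M mor_morph that by blast
  then show "\<psi> \<in> Coph X F" using \<psi> M le unfolding Coph_def by blast
qed

lemma subset_F_inj_if_le_ker_lowstar:
  assumes M: "M \<subseteq> mor X" and le: "\<And>C A. F C A \<subseteq> ker_lowstar X M C A"
  shows "M \<subseteq> F_inj X F"
proof
  fix i assume "i \<in> M"
  then show "i \<in> F_inj X F" using M le unfolding F_inj_def ker_lowstar_def by blast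
qed

lemma subset_F_proj_if_le_ker_upstar:
  assumes M: "M \<subseteq> mor X" and le: "\<And>C A. F C A \<subseteq> ker_upstar X M C A"
  shows "M \<subseteq> F_proj X F"
proof
  fix p assume "p \<in> M"
  then show "p \<in> F_proj X F" using M le unfolding F_proj_def ker_upstar_def by blast
qed

lemma upstar_subset_ker_lowstar_if_ext_orth:
  assumes J: "J \<subseteq> mor X" and orth: "\<And>i j. i \<in> I \<Longrightarrow> j \<in> J \<Longrightarrow> ext_orth X i j"
  shows "upstar X I C A \<subseteq> ker_lowstar X J C A"
proof
  fix d assume "d \<in> upstar X I C A"
  then obtain i C' d' where d: "d = pullE X A i d'" and i: "i \<in> I" "i \<in> morph X C C'"
    and A: "A \<in> ob X" and d': "d' \<in> Ext X C' A"
    unfolding upstar_def by blast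
  have "pushE X C k d = ezero X C (tgt X k)" if k: "k \<in> J" "src X k = A" for k
  proof -
    have km: "k \<in> morph X A (tgt X k)" using J k mor_morph by auto
    have "pushE X C k d = pullE X (tgt X k) i (pushE X C' k d')"
      using d pull_push[OF km i(2) d'] by simp
    also have "\<dots> = ezero X C (tgt X k)"
      using orth[OF i(1) k(1)] d' k(2) morphD[OF i(2)] unfolding ext_orth_def by simp
    finally show ?thesis .
  qed
  then show "d \<in> ker_lowstar X J C A"
    using d pull_Ext[OF A i(2) d'] unfolding ker_lowstar_def by blast
qed

lemma lowstar_subset_ker_upstar_if_ext_orth:
  assumes orth: "\<And>i j. i \<in> I \<Longrightarrow> j \<in> J \<Longrightarrow> ext_orth X i j"
  shows "lowstar X J C A \<subseteq> ker_upstar X I C A"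
proof
  fix d assume "d \<in> lowstar X J C A"
  then obtain j A' d' where d: "d = pushE X C j d'" and j: "j \<in> J" "j \<in> morph X A' A"
    and C: "C \<in> ob X" and d': "d' \<in> Ext X C A'"
    unfolding lowstar_def by blast
  have "pullE X A i d = ezero X (src X i) A" if i: "i \<in> I" "tgt X i = C" for i
    using orth[OF i(1) j(1)] d d' i(2) morphD[OF j(2)] unfolding ext_orth_def by simp
  then show "d \<in> ker_upstar X I C A"
    using d push_Ext[OF C j(2) d'] unfolding ker_upstar_def by blast
qed

end

locale ext_cotorsion_pair = extriangulated_category +
  fixes I J :: "'m set"
  assumes cotorsion_pair: "cotorsion_pair X I J"
begin

lemma ideal_I: "is_ideal X I" and ideal_J: "is_ideal X J"
  and I_eq_perp_left: "I = perp_left X J" and J_eq_perp_right: "J = perp_right X I"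
  using cotorsion_pair unfolding cotorsion_pair_def by blast+

lemma in_I_iff: "f \<in> I \<longleftrightarrow> f \<in> perp_left X J"
  by (subst I_eq_perp_left) (rule refl)

lemma in_J_iff: "g \<in> J \<longleftrightarrow> g \<in> perp_right X I"
  by (subst J_eq_perp_right) (rule refl)

lemma I_mor: "I \<subseteq> mor X"
  using ideal_mor[OF ideal_I] by blast

lemma J_mor: "J \<subseteq> mor X"
  using ideal_mor[OF ideal_J] by blast

lemma I_J_ext_orth:
  assumes "i \<in> I" "j \<in> J"
  shows "ext_orth X i j"
proof -
  have "j \<in> perp_right X I" using assms(2) in_J_iff by blast
  then show ?thesis using assms(1) unfolding perp_right_ext_orth by blast
qed

lemma upstar_subset_ker_lowstar: "upstar X I C A \<subseteq> ker_lowstar X J C A"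
  using upstar_subset_ker_lowstar_if_ext_orth[OF J_mor I_J_ext_orth] .

lemma lowstar_subset_ker_upstar: "lowstar X J C A \<subseteq> ker_upstar X I C A"
  using lowstar_subset_ker_upstar_if_ext_orth[OF I_J_ext_orth] .

lemma F_inj_subset_J_if_Ph_eq: "I = Ph X F \<Longrightarrow> F_inj X F \<subseteq> J"
  using F_inj_subset_perp_right_Ph[of F] J_eq_perp_right by simp

lemma Ph_subset_I_if_F_inj_eq: "J = F_inj X F \<Longrightarrow> Ph X F \<subseteq> I"
  using Ph_subset_perp_left_F_inj[of F] I_eq_perp_left by simp

lemma Coph_subset_J_if_F_proj_eq: "I = F_proj X F \<Longrightarrow> Coph X F \<subseteq> J"
  using Coph_subset_perp_right_F_proj[of F] J_eq_perp_right by simp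

lemma F_proj_subset_I_if_Coph_eq: "J = Coph X F \<Longrightarrow> F_proj X F \<subseteq> I"
  using F_proj_subset_perp_left_Coph[of F] I_eq_perp_left by simp

lemma Ph_F_inj_eq_if_between:
  assumes lower: "\<And>C A. upstar X I C A \<subseteq> F C A"
    and upper: "\<And>C A. F C A \<subseteq> ker_lowstar X J C A"
  shows "Ph X F = I" "F_inj X F = J"
proof -
  have I: "I \<subseteq> Ph X F" using subset_Ph_if_upstar_le[OF I_mor lower] .
  have J: "J \<subseteq> F_inj X F" using subset_F_inj_if_le_ker_lowstar[OF J_mor upper] .
  have "Ph X F \<subseteq> perp_left X J"
    using Ph_subset_perp_left_F_inj perp_left_antimono[OF J] by blast
  then show "Ph X F = I" using I I_eq_perp_left by auto
  have "F_inj X F \<subseteq> perp_right X I"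
    using F_inj_subset_perp_right_Ph perp_right_antimono[OF I] by blast
  then show "F_inj X F = J" using J J_eq_perp_right by auto
qed

lemma F_proj_Coph_eq_if_between:
  assumes lower: "\<And>C A. lowstar X J C A \<subseteq> F C A"
    and upper: "\<And>C A. F C A \<subseteq> ker_upstar X I C A"
  shows "F_proj X F = I" "Coph X F = J"
proof -
  have J: "J \<subseteq> Coph X F" using subset_Coph_if_lowstar_le[OF J_mor lower] .
  have I: "I \<subseteq> F_proj X F" using subset_F_proj_if_le_ker_upstar[OF I_mor upper] .
  have "F_proj X F \<subseteq> perp_left X J"
    using F_proj_subset_perp_left_Coph perp_left_antimono[OF J] by blast
  then show "F_proj X F = I" using I I_eq_perp_left by auto
  have "Coph X F \<subseteq> perp_right X I"
    using Coph_subset_perp_right_F_proj perp_right_antimono[OF I] by blast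
  then show "Coph X F = J" using J J_eq_perp_right by auto
qed

lemma spec_preenveloping_if_enough_spec_inj:
  assumes esi: "enough_spec_inj X F" and "F_inj X F \<subseteq> J" "Ph X F \<subseteq> I"
  shows "spec_preenveloping X J"
  unfolding spec_preenveloping_def
proof
  fix A assume "A \<in> ob X"
  then obtain B C e y d B' C' x' y' d' b \<phi> where ft: "Ftri X F A B C e y d"
    and e: "e \<in> F_inj X F" and t': "etri X A B' C' x' y' d'"
    and tm: "tri_mor X A B C e y d A B' C' x' y' d' (idm X A) b \<phi>" and \<phi>: "\<phi> \<in> Ph X F"
    using bspec[OF esi[unfolded enough_spec_inj_def]] by metis
  have te: "etri X A B C e y d" using ft unfolding Ftri_def by simp
  have "\<phi> \<in> perp_left X J" using \<phi> assms(3) in_I_iff by blast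
  then have "spec_preenvelope X J A e"
    unfolding spec_preenvelope_def using e assms(2) morphD[OF etriD(4)[OF te]] te t' tm by blast
  then show "\<exists>e. spec_preenvelope X J A e" ..
qed

lemma spec_precovering_if_enough_spec_proj:
  assumes esp: "enough_spec_proj X F" and "F_proj X F \<subseteq> I" "Coph X F \<subseteq> J"
  shows "spec_precovering X I"
  unfolding spec_precovering_def
proof
  fix C assume "C \<in> ob X"
  then obtain K B x p d K' B' x' y' d' \<psi> b where ft: "Ftri X F K B C x p d"
    and p: "p \<in> F_proj X F" and t': "etri X K' B' C x' y' d'"
    and tm: "tri_mor X K' B' C x' y' d' K B C x p d \<psi> b (idm X C)" and \<psi>: "\<psi> \<in> Coph X F"
    using bspec[OF esp[unfolded enough_spec_proj_def]] by metis
  have tp: "etri X K B C x p d" using ft unfolding Ftri_def by simp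
  have "\<psi> \<in> perp_right X I" using \<psi> assms(3) in_J_iff by blast
  then have "spec_precover X I C p"
    unfolding spec_precover_def using p assms(2) morphD[OF etriD(5)[OF tp]] tp t' tm by blast
  then show "\<exists>i. spec_precover X I C i" ..
qed

lemma special_precover_ext_in_lowstar:
  assumes "etri X A' B' C x' i d'"
    and "tri_mor X A B C x y d A' B' C x' i d' j b (idm X C)" and "j \<in> perp_right X I"
    and "C \<in> ob X" "d \<in> Ext X C A"
  shows "d' \<in> lowstar X J C A'"
proof -
  have "d' = pushE X C j d" using tri_mor_id_right_ext[OF assms(1,2)] .
  moreover have "j \<in> morph X A A'" using assms(2) unfolding tri_mor_def by blast
  ultimately show ?thesis unfolding lowstar_def using assms(3-5) in_J_iff by blast
qed

lemma special_preenvelope_ext_in_upstar: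
  assumes "etri X A B C e y d"
    and "tri_mor X A B C e y d A B' C' x' y' d' (idm X A) b j" and "j \<in> perp_left X J"
    and "A \<in> ob X" "d' \<in> Ext X C' A"
  shows "d \<in> upstar X I C A"
proof -
  have "d = pullE X A j d'" using tri_mor_id_left_ext[OF assms(1,2)] .
  moreover have "j \<in> morph X C C'" using assms(2) unfolding tri_mor_def by blast
  ultimately show ?thesis unfolding upstar_def using assms(3-5) in_I_iff by blast
qed

lemma enough_spec_inj_if_spec_preenveloping:
  assumes env: "spec_preenveloping X J"
    and lower: "\<And>C A. upstar X I C A \<subseteq> F C A"
    and upper: "\<And>C A. F C A \<subseteq> ker_lowstar X J C A"
  shows "enough_spec_inj X F"
  unfolding enough_spec_inj_def
proof
  fix A assume A: "A \<in> ob X"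
  then obtain e where "spec_preenvelope X J A e" using env unfolding spec_preenveloping_def by blast
  then obtain Y y d B C x' y' d' b j where e: "e \<in> J" and te: "etri X A (tgt X e) Y e y d"
    and t0: "etri X A B C x' y' d'"
    and tm: "tri_mor X A (tgt X e) Y e y d A B C x' y' d' (idm X A) b j"
    and j: "j \<in> perp_left X J"
    unfolding spec_preenvelope_def by blast
  have "d \<in> upstar X I Y A"
    using special_preenvelope_ext_in_upstar[OF te tm j A etriD(6)[OF t0]] .
  then have "Ftri X F A (tgt X e) Y e y d" unfolding Ftri_def using te lower by blast
  moreover have "e \<in> F_inj X F" "j \<in> Ph X F"
    using Ph_F_inj_eq_if_between[OF lower upper] e j in_I_iff by simp_all
  ultimately show "\<exists>B C e y d B' C' x' y' d' b \<phi>.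
     Ftri X F A B C e y d \<and> e \<in> F_inj X F \<and> etri X A B' C' x' y' d' \<and>
     tri_mor X A B C e y d A B' C' x' y' d' (idm X A) b \<phi> \<and> \<phi> \<in> Ph X F"
    using t0 tm by blast
qed

lemma enough_spec_proj_if_spec_precovering:
  assumes pre: "spec_precovering X I"
    and lower: "\<And>C A. lowstar X J C A \<subseteq> F C A"
    and upper: "\<And>C A. F C A \<subseteq> ker_upstar X I C A"
  shows "enough_spec_proj X F"
  unfolding enough_spec_proj_def
proof
  fix C assume C: "C \<in> ob X"
  then obtain i where "spec_precover X I C i" using pre unfolding spec_precovering_def by blast
  then obtain A B x y d A' x' d' j b where i: "i \<in> I" "tgt X i = C"
    and t: "etri X A B C x y d" and t': "etri X A' (src X i) C x' i d'"
    and tm: "tri_mor X A B C x y d A' (src X i) C x' i d' j b (idm X C)"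
    and j: "j \<in> perp_right X I"
    unfolding spec_precover_def by blast
  have "d' \<in> lowstar X J C A'"
    using special_precover_ext_in_lowstar[OF t' tm j C etriD(6)[OF t]] .
  then have "Ftri X F A' (src X i) C x' i d'" unfolding Ftri_def using t' lower by blast
  moreover have "i \<in> F_proj X F" "j \<in> Coph X F"
    using F_proj_Coph_eq_if_between[OF lower upper] i j in_J_iff by simp_all
  ultimately show "\<exists>K B x p d K' B' x' y' d' \<psi> b.
     Ftri X F K B C x p d \<and> p \<in> F_proj X F \<and> etri X K' B' C x' y' d' \<and>
     tri_mor X K' B' C x' y' d' K B C x p d \<psi> b (idm X C) \<and> \<psi> \<in> Coph X F"
    using t tm by blast
qed

lemma I_factors_through_deflation:
  assumes t: "etri X A B C x y d" and d: "d \<in> lowstar X J C A"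
    and n: "n \<in> I" "n \<in> morph X V C"
  obtains g where "g \<in> morph X V B" "cmp X y g = n"
proof -
  have "pullE X A n d = ezero X V A"
    using lowstar_subset_ker_upstar d n morphD[OF n(2)] unfolding ker_upstar_def by blast
  then show thesis using etri_lift_through_deflation[OF t n(2)] that by blast
qed

lemma J_extends_along_inflation:
  assumes t: "etri X A B C x y d" and d: "d \<in> upstar X I C A"
    and n: "n \<in> J" "n \<in> morph X A V"
  obtains g where "g \<in> morph X B V" "cmp X g x = n"
proof -
  have "pushE X C n d = ezero X C V"
    using upstar_subset_ker_lowstar d n morphD[OF n(2)] unfolding ker_lowstar_def by blast
  then show thesis using etri_extend_along_inflation[OF t n(2)] that by blast
qed

lemma inflation_of_pullback_along_special_precover_in_J:
  assumes t: "etri X A E C x y d" and E: "injective_obj X E"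
    and t': "etri X A' B' C x' i d'" and d': "d' \<in> lowstar X J C A'"
    and t1: "etri X A Z B' e y1 (pullE X A i d)"
  shows "e \<in> J"
proof -
  have A: "A \<in> ob X" and e: "e \<in> morph X A Z" and i: "i \<in> morph X B' C"
    using etriD[OF t] etriD[OF t1] etriD[OF t'] by auto
  have "ext_orth X m e" if m: "m \<in> I" for m
  proof -
    define V W where "V = src X m" and "W = tgt X m"
    have mm: "m \<in> morph X V W" using mor_morph I_mor m V_def W_def by auto
    have W: "W \<in> ob X" using morphD[OF mm] by simp
    have "pushE X V e (pullE X A m c) = ezero X V Z" if c: "c \<in> Ext X W A" for c
    proof -
      have "pushE X W x c = ezero X W E"
        using E W push_Ext[OF W etriD(4)[OF t] c] unfolding injective_obj_def by blast
      then obtain w where w: "w \<in> morph X W C" and c_eq: "c = pullE X A w d"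
        using etri_ext_pulled_back[OF t W c] by blast
      have n: "cmp X w m \<in> I" "cmp X w m \<in> morph X V C"
        using ideal_cmp_left[OF ideal_I m mm w] cmp_morph[OF mm w] .
      obtain g where g: "g \<in> morph X V B'" "cmp X i g = cmp X w m"
        using I_factors_through_deflation[OF t' d' n] .
      have "pullE X A m c = pullE X A (cmp X w m) d"
        using c_eq pull_cmp[OF A w mm etriD(6)[OF t]] by simp
      also have "\<dots> = pullE X A g (pullE X A i d)"
        using g(2) pull_cmp[OF A i g(1) etriD(6)[OF t]] by simp
      finally have "pushE X V e (pullE X A m c) = pullE X Z g (pushE X B' e (pullE X A i d))"
        using pull_push[OF e g(1) etriD(6)[OF t1]] by simp
      also have "\<dots> = ezero X V Z"
        using etri_push_inflation[OF t1] pull_ezero[OF morphD(2)[OF e] g(1)] by simp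
      finally show ?thesis .
    qed
    then show ?thesis
      unfolding ext_orth_push_pull[OF morphD(3)[OF mm] morphD(3)[OF e]]
      using mm e morphD by auto
  qed
  then show ?thesis using in_J_iff morphD(3)[OF e] unfolding perp_right_ext_orth by blast
qed

lemma deflation_of_pushout_along_special_preenvelope_in_I:
  assumes t: "etri X K P C x y d" and P: "projective_obj X P"
    and t': "etri X K T Y e y' d'" and d': "d' \<in> upstar X I Y K"
    and t1: "etri X T Z C x1 p (pushE X C e d)"
  shows "p \<in> I"
proof -
  have C: "C \<in> ob X" and p: "p \<in> morph X Z C" and e: "e \<in> morph X K T"
    using etriD[OF t] etriD[OF t1] etriD[OF t'] by auto
  have "ext_orth X p m" if m: "m \<in> J" for m
  proof -
    define U V where "U = src X m" and "V = tgt X m"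
    have mm: "m \<in> morph X U V" using mor_morph J_mor m U_def V_def by auto
    have U: "U \<in> ob X" using morphD[OF mm] by simp
    have "pullE X V p (pushE X C m c) = ezero X Z V" if c: "c \<in> Ext X C U" for c
    proof -
      have "pullE X U y c = ezero X P U"
        using P U pull_Ext[OF U etriD(5)[OF t] c] unfolding projective_obj_def by blast
      then obtain w where w: "w \<in> morph X K U" and c_eq: "c = pushE X C w d"
        using etri_ext_pushed_forward[OF t U c] by blast
      have n: "cmp X m w \<in> J" "cmp X m w \<in> morph X K V"
        using ideal_cmp_right[OF ideal_J m mm w] cmp_morph[OF w mm] .
      obtain g where g: "g \<in> morph X T V" "cmp X g e = cmp X m w"
        using J_extends_along_inflation[OF t' d' n] .
      have "pushE X C m c = pushE X C (cmp X m w) d"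
        using c_eq push_cmp[OF C w mm etriD(6)[OF t]] by simp
      also have "\<dots> = pushE X C g (pushE X C e d)"
        using g(2) push_cmp[OF C e g(1) etriD(6)[OF t]] by simp
      finally have "pullE X V p (pushE X C m c) = pushE X Z g (pullE X T p (pushE X C e d))"
        using pull_push[OF g(1) p etriD(6)[OF t1]] by simp
      also have "\<dots> = ezero X Z V"
        using etri_pull_deflation[OF t1] push_ezero[OF morphD(1)[OF p] g(1)] by simp
      finally show ?thesis .
    qed
    then show ?thesis unfolding ext_orth_def using mm p morphD by auto
  qed
  then show ?thesis using in_I_iff morphD(3)[OF p] unfolding perp_left_ext_orth by blast
qed

lemma spec_preenveloping_if_spec_precovering:
  assumes inj: "enough_injectives X" and pre: "spec_precovering X I"
  shows "spec_preenveloping X J"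
  unfolding spec_preenveloping_def
proof
  fix A assume "A \<in> ob X"
  then obtain E C x y d where E: "injective_obj X E" and t: "etri X A E C x y d"
    using inj unfolding enough_injectives_def by blast
  have C: "C \<in> ob X" using etriD[OF t] by simp
  then obtain i where "spec_precover X I C i" using pre unfolding spec_precovering_def by blast
  then obtain A0 B0 x0 y0 d0 A' x' d' j b0 where i: "i \<in> I" "tgt X i = C"
    and t': "etri X A' (src X i) C x' i d'" and t0: "etri X A0 B0 C x0 y0 d0"
    and tm0: "tri_mor X A0 B0 C x0 y0 d0 A' (src X i) C x' i d' j b0 (idm X C)"
    and j: "j \<in> perp_right X I"
    unfolding spec_precover_def by blast
  have d': "d' \<in> lowstar X J C A'"
    using special_precover_ext_in_lowstar[OF t' tm0 j C etriD(6)[OF t0]] .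
  obtain Z e y1 b where t1: "etri X A Z (src X i) e y1 (pullE X A i d)"
    and tm: "tri_mor X A Z (src X i) e y1 (pullE X A i d) A E C x y d (idm X A) b i"
    using etri_pullback[OF t etriD(5)[OF t']] .
  have "e \<in> J"
    using inflation_of_pullback_along_special_precover_in_J[OF t E t' d' t1] .
  moreover have "i \<in> perp_left X J" using i in_I_iff by blast
  ultimately have "spec_preenvelope X J A e"
    unfolding spec_preenvelope_def using t1 t tm morphD[OF etriD(4)[OF t1]] by blast
  then show "\<exists>e. spec_preenvelope X J A e" ..
qed

lemma spec_precovering_if_spec_preenveloping:
  assumes proj: "enough_projectives X" and env: "spec_preenveloping X J"
  shows "spec_precovering X I"
  unfolding spec_precovering_def
proof
  fix C assume "C \<in> ob X"
  then obtain K P x y d where P: "projective_obj X P" and t: "etri X K P C x y d"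
    using proj unfolding enough_projectives_def by blast
  have K: "K \<in> ob X" using etriD[OF t] by simp
  then obtain e where "spec_preenvelope X J K e" using env unfolding spec_preenveloping_def by blast
  then obtain Y y' d' B0 C0 x0 y0 d0 b0 j where e: "e \<in> J" "src X e = K"
    and t': "etri X K (tgt X e) Y e y' d'" and t0: "etri X K B0 C0 x0 y0 d0"
    and tm0: "tri_mor X K (tgt X e) Y e y' d' K B0 C0 x0 y0 d0 (idm X K) b0 j"
    and j: "j \<in> perp_left X J"
    unfolding spec_preenvelope_def by blast
  have d': "d' \<in> upstar X I Y K"
    using special_preenvelope_ext_in_upstar[OF t' tm0 j K etriD(6)[OF t0]] .
  obtain Z x1 p b where t1: "etri X (tgt X e) Z C x1 p (pushE X C e d)"
    and tm: "tri_mor X K P C x y d (tgt X e) Z C x1 p (pushE X C e d) e b (idm X C)"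
    using etri_pushout[OF t etriD(4)[OF t']] .
  have "p \<in> I"
    using deflation_of_pushout_along_special_preenvelope_in_I[OF t P t' d' t1] .
  moreover have "e \<in> perp_right X I" using e in_J_iff by blast
  ultimately have "spec_precover X I C p"
    unfolding spec_precover_def using t1 t tm morphD[OF etriD(5)[OF t1]] by blast
  then show "\<exists>i. spec_precover X I C i" ..
qed

(* I^* need not be closed under sums, so the additive subfunctor used here is Ker J_*. *)
lemma spec_preenveloping_iff_subfunctor:
  "spec_preenveloping X J \<longleftrightarrow> (\<exists>F. additive_subfunctor X F \<and> enough_spec_inj X F \<and> I = Ph X F)"
  "spec_preenveloping X J \<longleftrightarrow> (\<exists>F. additive_subfunctor X F \<and> enough_spec_inj X F \<and> J = F_inj X F)"
proof -
  have eq: "Ph X (ker_lowstar X J) = I" "F_inj X (ker_lowstar X J) = J"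
    using Ph_F_inj_eq_if_between[OF upstar_subset_ker_lowstar subset_refl] .
  have "spec_preenveloping X J \<Longrightarrow> enough_spec_inj X (ker_lowstar X J)"
    using enough_spec_inj_if_spec_preenveloping[OF _ upstar_subset_ker_lowstar subset_refl] .
  then have ker: "spec_preenveloping X J \<Longrightarrow> additive_subfunctor X (ker_lowstar X J) \<and>
      enough_spec_inj X (ker_lowstar X J)"
    using additive_subfunctor_ker_lowstar[OF ideal_J] by blast
  show "spec_preenveloping X J \<longleftrightarrow>
      (\<exists>F. additive_subfunctor X F \<and> enough_spec_inj X F \<and> I = Ph X F)"
    using ker eq spec_preenveloping_if_enough_spec_inj F_inj_subset_J_if_Ph_eq
    by (metis order_refl)
  show "spec_preenveloping X J \<longleftrightarrow>
      (\<exists>F. additive_subfunctor X F \<and> enough_spec_inj X F \<and> J = F_inj X F)"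
    using ker eq spec_preenveloping_if_enough_spec_inj Ph_subset_I_if_F_inj_eq
    by (metis order_refl)
qed

lemma spec_preenveloping_iff_upstar:
  "spec_preenveloping X J \<longleftrightarrow> enough_spec_inj X (upstar X I) \<and> I = Ph X (upstar X I)"
  "spec_preenveloping X J \<longleftrightarrow> enough_spec_inj X (upstar X I) \<and> J = F_inj X (upstar X I)"
proof -
  have eq: "Ph X (upstar X I) = I" "F_inj X (upstar X I) = J"
    using Ph_F_inj_eq_if_between[OF subset_refl upstar_subset_ker_lowstar] .
  have "spec_preenveloping X J \<longleftrightarrow> enough_spec_inj X (upstar X I)"
    using enough_spec_inj_if_spec_preenveloping[OF _ subset_refl upstar_subset_ker_lowstar]
      spec_preenveloping_if_enough_spec_inj eq by (metis order_refl)
  then show "spec_preenveloping X J \<longleftrightarrow> enough_spec_inj X (upstar X I) \<and> I = Ph X (upstar X I)"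
    "spec_preenveloping X J \<longleftrightarrow> enough_spec_inj X (upstar X I) \<and> J = F_inj X (upstar X I)"
    using eq by simp_all
qed

lemma spec_precovering_iff_subfunctor:
  "spec_precovering X I \<longleftrightarrow> (\<exists>F. additive_subfunctor X F \<and> enough_spec_proj X F \<and> I = F_proj X F)"
  "spec_precovering X I \<longleftrightarrow> (\<exists>F. additive_subfunctor X F \<and> enough_spec_proj X F \<and> J = Coph X F)"
proof -
  have eq: "F_proj X (ker_upstar X I) = I" "Coph X (ker_upstar X I) = J"
    using F_proj_Coph_eq_if_between[OF lowstar_subset_ker_upstar subset_refl] .
  have "spec_precovering X I \<Longrightarrow> enough_spec_proj X (ker_upstar X I)"
    using enough_spec_proj_if_spec_precovering[OF _ lowstar_subset_ker_upstar subset_refl] .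
  then have ker: "spec_precovering X I \<Longrightarrow> additive_subfunctor X (ker_upstar X I) \<and>
      enough_spec_proj X (ker_upstar X I)"
    using additive_subfunctor_ker_upstar[OF ideal_I] by blast
  show "spec_precovering X I \<longleftrightarrow>
      (\<exists>F. additive_subfunctor X F \<and> enough_spec_proj X F \<and> I = F_proj X F)"
    using ker eq spec_precovering_if_enough_spec_proj Coph_subset_J_if_F_proj_eq
    by (metis order_refl)
  show "spec_precovering X I \<longleftrightarrow>
      (\<exists>F. additive_subfunctor X F \<and> enough_spec_proj X F \<and> J = Coph X F)"
    using ker eq spec_precovering_if_enough_spec_proj F_proj_subset_I_if_Coph_eq
    by (metis order_refl)
qed

lemma spec_precovering_iff_lowstar:
  "spec_precovering X I \<longleftrightarrow> enough_spec_proj X (lowstar X J) \<and> I = F_proj X (lowstar X J)"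
  "spec_precovering X I \<longleftrightarrow> enough_spec_proj X (lowstar X J) \<and> J = Coph X (lowstar X J)"
proof -
  have eq: "F_proj X (lowstar X J) = I" "Coph X (lowstar X J) = J"
    using F_proj_Coph_eq_if_between[OF subset_refl lowstar_subset_ker_upstar] .
  have "spec_precovering X I \<longleftrightarrow> enough_spec_proj X (lowstar X J)"
    using enough_spec_proj_if_spec_precovering[OF _ subset_refl lowstar_subset_ker_upstar]
      spec_precovering_if_enough_spec_proj eq by (metis order_refl)
  then show "spec_precovering X I \<longleftrightarrow> enough_spec_proj X (lowstar X J) \<and> I = F_proj X (lowstar X J)"
    "spec_precovering X I \<longleftrightarrow> enough_spec_proj X (lowstar X J) \<and> J = Coph X (lowstar X J)"
    using eq by simp_all
qed

lemma complete_iff_spec_precovering: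
  "enough_injectives X \<Longrightarrow> complete_cotorsion_pair X I J \<longleftrightarrow> spec_precovering X I"
  unfolding complete_cotorsion_pair_def
  using cotorsion_pair spec_preenveloping_if_spec_precovering by blast

lemma complete_iff_spec_preenveloping:
  "enough_projectives X \<Longrightarrow> complete_cotorsion_pair X I J \<longleftrightarrow> spec_preenveloping X J"
  unfolding complete_cotorsion_pair_def
  using cotorsion_pair spec_precovering_if_spec_preenveloping by blast

end

theorem mainTheorem14:
  fixes X :: "('o,'m,'e) extri_data" and I J :: "'m set"
  assumes "extriangulated X"
    and "enough_injectives X" and "enough_projectives X"
    and "cotorsion_pair X I J"
  shows "(complete_cotorsion_pair X I J \<longleftrightarrow> spec_precovering X I) \<and>
    (complete_cotorsion_pair X I J \<longleftrightarrow>
       (\<exists>F. additive_subfunctor X F \<and> enough_spec_inj X F \<and> I = Ph X F)) \<and>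
    (complete_cotorsion_pair X I J \<longleftrightarrow>
       (\<exists>F. additive_subfunctor X F \<and> enough_spec_proj X F \<and> I = F_proj X F)) \<and>
    (complete_cotorsion_pair X I J \<longleftrightarrow>
       enough_spec_inj X (upstar X I) \<and> I = Ph X (upstar X I)) \<and>
    (complete_cotorsion_pair X I J \<longleftrightarrow>
       enough_spec_proj X (lowstar X J) \<and> I = F_proj X (lowstar X J)) \<and>
    (complete_cotorsion_pair X I J \<longleftrightarrow> spec_preenveloping X J) \<and>
    (complete_cotorsion_pair X I J \<longleftrightarrow>
       (\<exists>F. additive_subfunctor X F \<and> enough_spec_proj X F \<and> J = Coph X F)) \<and>
    (complete_cotorsion_pair X I J \<longleftrightarrow>
       (\<exists>F. additive_subfunctor X F \<and> enough_spec_inj X F \<and> J = F_inj X F)) \<and>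
    (complete_cotorsion_pair X I J \<longleftrightarrow>
       enough_spec_proj X (lowstar X J) \<and> J = Coph X (lowstar X J)) \<and>
    (complete_cotorsion_pair X I J \<longleftrightarrow>
       enough_spec_inj X (upstar X I) \<and> J = F_inj X (upstar X I))"
proof -
  interpret ext_cotorsion_pair X I J
    using assms(1,4) by (intro ext_cotorsion_pair.intro extriangulated_category.intro
        ext_cotorsion_pair_axioms.intro)
  note precovering = complete_iff_spec_precovering[OF assms(2)]
  note preenveloping = complete_iff_spec_preenveloping[OF assms(3)]
  show ?thesis
    using precovering spec_precovering_iff_subfunctor spec_precovering_iff_lowstar
      preenveloping spec_preenveloping_iff_subfunctor spec_preenveloping_iff_upstar
    by simp
qed

end
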